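(* Let $w$ be a locally integrable function on $[0,\infty)$ with $w(t)>0$ a.e. and $\int_0^\infty w(t)\,dt=\infty$, and let $1\le p<\infty$. Then the space $\widetilde{L_p(w)}$ is isomorphic to $(\bigoplus_{n\in\mathbb Z}L_\infty[0,1])_{l_p}$, with the constant of the isomorphism depending only on $w$.
   Context: $L_p(w)$ is the space of measurable $f$ on $[0,\infty)$ with $\|f\|_{L_p(w)}=(\int_0^\infty|f(t)|^pw(t)\,dt)^{1/p}<\infty$. For measurable $f$, $\widetilde f(x)=\operatorname{ess\,sup}_{t\ge x}|f(t)|$, and $\widetilde{L_p(w)}=\{f:\widetilde f\in L_p(w)\}$ with $\|f\|=\|\widetilde f\|_{L_p(w)}$. $(\bigoplus_{n\in\mathbb Z}X_n)_{l_p}$ is the space of families $(x_n)_{n\in\mathbb Z}$, $x_n\in X_n$, with norm $(\sum_n\|x_n\|^p)^{1/p}<\infty$. *)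

theory Defs
  imports "HOL-Analysis.Analysis"
begin

definition epow :: "ennreal \<Rightarrow> real \<Rightarrow> ennreal" where
  "epow c p = (if c = \<infinity> then \<infinity> else ennreal ((enn2real c) powr p))"

definition tilde :: "(real \<Rightarrow> real) \<Rightarrow> real \<Rightarrow> ennreal" where
  "tilde f x = Inf {c. AE t in lebesgue. t \<ge> x \<longrightarrow> ennreal \<bar>f t\<bar> \<le> c}"

definition tilde_int :: "real \<Rightarrow> (real \<Rightarrow> real) \<Rightarrow> (real \<Rightarrow> real) \<Rightarrow> ennreal" where
  "tilde_int p w f = (\<integral>\<^sup>+ t. epow (tilde f t) p * ennreal (w t) * indicator {0..} t \<partial>lebesgue)"

definition tildeLp :: "real \<Rightarrow> (real \<Rightarrow> real) \<Rightarrow> (real \<Rightarrow> real) set" where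
  "tildeLp p w = {f. f \<in> borel_measurable (restrict_space lebesgue {0..}) \<and> tilde_int p w f < \<infinity>}"

definition tildeLp_norm :: "real \<Rightarrow> (real \<Rightarrow> real) \<Rightarrow> (real \<Rightarrow> real) \<Rightarrow> real" where
  "tildeLp_norm p w f = (enn2real (tilde_int p w f)) powr (1 / p)"

definition Linf01_norm :: "(real \<Rightarrow> real) \<Rightarrow> ennreal" where
  "Linf01_norm g = Inf {c. AE t in lebesgue. t \<in> {0..1} \<longrightarrow> ennreal \<bar>g t\<bar> \<le> c}"

definition lp_sum :: "real \<Rightarrow> (int \<Rightarrow> real \<Rightarrow> real) \<Rightarrow> ennreal" where
  "lp_sum p x = (\<integral>\<^sup>+ n. epow (Linf01_norm (x n)) p \<partial>count_space UNIV)"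

definition lpLinf :: "real \<Rightarrow> (int \<Rightarrow> real \<Rightarrow> real) set" where
  "lpLinf p = {x. (\<forall>n. x n \<in> borel_measurable (restrict_space lebesgue {0..1})) \<and> lp_sum p x < \<infinity>}"

definition lpLinf_norm :: "real \<Rightarrow> (int \<Rightarrow> real \<Rightarrow> real) \<Rightarrow> real" where
  "lpLinf_norm p x = (enn2real (lp_sum p x)) powr (1 / p)"

end

theory Submission imports Defs begin

text \<open>The cumulative weight W(a) = int_0^a w is continuous, strictly increasing and unbounded,
so there are points x_n (n in Z) with W(x_n) = 2^n: the block [x_n, x_(n+1)) carries weight 2^n.
Let a_n be the essential supremum of |f| on block n. Since the tilde function is decreasing, it
is at least a_(n+1) on block n, and its p-th power at x_n is at most the tail sum of a_k^p over
k >= n. Integrating against w block by block and using sum_(n <= k) 2^n = 2^(k+1) gives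
sum_n 2^n a_n^p <= 2 int (tilde f)^p w <= 4 sum_n 2^n a_n^p. Mapping block n affinely onto
[0,1] and multiplying by 2^(n/p) turns sum_n 2^n a_n^p into the l_p-sum of the L_infinity[0,1]
norms, so this rescaling is an isomorphism with both constants 2^(1/p).\<close>

definition ess_sup_on :: "(real \<Rightarrow> bool) \<Rightarrow> (real \<Rightarrow> real) \<Rightarrow> ennreal" where
  "ess_sup_on Q g = Inf {c. AE t in lebesgue. Q t \<longrightarrow> ennreal \<bar>g t\<bar> \<le> c}"

lemma tilde_eq_ess_sup_on: "tilde f x = ess_sup_on (\<lambda>t. x \<le> t) f"
  by (simp add: tilde_def ess_sup_on_def)

lemma Linf01_norm_eq_ess_sup_on: "Linf01_norm g = ess_sup_on (\<lambda>t. t \<in> {0..1}) g"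
  by (simp add: Linf01_norm_def ess_sup_on_def)

lemma AE_le_ess_sup_on: "AE t in lebesgue. Q t \<longrightarrow> ennreal \<bar>g t\<bar> \<le> ess_sup_on Q g"
proof (cases "{c. AE t in lebesgue. Q t \<longrightarrow> ennreal \<bar>g t\<bar> \<le> c} = {}")
  case True
  then show ?thesis by (simp add: ess_sup_on_def)
next
  case False
  then obtain h :: "nat \<Rightarrow> ennreal"
    where h: "range h \<subseteq> {c. AE t in lebesgue. Q t \<longrightarrow> ennreal \<bar>g t\<bar> \<le> c}"
      and Inf_h: "ess_sup_on Q g = (INF i. h i)"
    using ennreal_Inf_countable_INF[OF False] unfolding ess_sup_on_def by blast
  have "AE t in lebesgue. \<forall>i. Q t \<longrightarrow> ennreal \<bar>g t\<bar> \<le> h i"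
    using h by (subst AE_all_countable) auto
  then show ?thesis
    by eventually_elim (auto simp: Inf_h intro: INF_greatest)
qed

lemma ess_sup_on_least: "AE t in lebesgue. Q t \<longrightarrow> ennreal \<bar>g t\<bar> \<le> c \<Longrightarrow> ess_sup_on Q g \<le> c"
  unfolding ess_sup_on_def by (rule Inf_lower) simp

lemma ess_sup_on_mono:
  assumes "AE t in lebesgue. Q t \<longrightarrow> Q' t \<and> \<bar>g t\<bar> \<le> \<bar>h t\<bar>"
  shows "ess_sup_on Q g \<le> ess_sup_on Q' h"
proof (rule ess_sup_on_least)
  show "AE t in lebesgue. Q t \<longrightarrow> ennreal \<bar>g t\<bar> \<le> ess_sup_on Q' h"
    using assms AE_le_ess_sup_on[of Q' h]
    by eventually_elim (meson ennreal_leI order_trans)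
qed

lemma ess_sup_on_cong:
  assumes "AE t in lebesgue. (Q t \<longleftrightarrow> Q' t) \<and> (Q t \<longrightarrow> \<bar>g t\<bar> = \<bar>h t\<bar>)"
  shows "ess_sup_on Q g = ess_sup_on Q' h"
  using assms by (intro antisym ess_sup_on_mono; eventually_elim; auto)

lemma ess_sup_on_cmult_le:
  assumes "c \<ge> 0"
  shows "ess_sup_on Q (\<lambda>t. c * g t) \<le> ennreal c * ess_sup_on Q g"
proof (rule ess_sup_on_least)
  show "AE t in lebesgue. Q t \<longrightarrow> ennreal \<bar>c * g t\<bar> \<le> ennreal c * ess_sup_on Q g"
    using AE_le_ess_sup_on[of Q g]
  proof eventually_elim
    case (elim t)
    then have "Q t \<longrightarrow> ennreal c * ennreal \<bar>g t\<bar> \<le> ennreal c * ess_sup_on Q g"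
      by (auto intro: mult_left_mono)
    then show ?case
      using assms by (simp add: abs_mult ennreal_mult)
  qed
qed

lemma ess_sup_on_cmult:
  assumes c: "c > 0"
  shows "ess_sup_on Q (\<lambda>t. c * g t) = ennreal c * ess_sup_on Q g"
proof (rule antisym)
  show "ess_sup_on Q (\<lambda>t. c * g t) \<le> ennreal c * ess_sup_on Q g"
    using c by (intro ess_sup_on_cmult_le) simp
  have "ess_sup_on Q g = ess_sup_on Q (\<lambda>t. (1/c) * (c * g t))"
    using c by (intro ess_sup_on_cong) auto
  also have "\<dots> \<le> ennreal (1/c) * ess_sup_on Q (\<lambda>t. c * g t)"
    using c by (intro ess_sup_on_cmult_le) simp
  finally have "ennreal c * ess_sup_on Q g \<le> ennreal c * (ennreal (1/c) * ess_sup_on Q (\<lambda>t. c * g t))"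
    by (rule mult_left_mono) simp
  also have "\<dots> = ess_sup_on Q (\<lambda>t. c * g t)"
    using c by (simp add: mult.assoc[symmetric] ennreal_mult[symmetric])
  finally show "ennreal c * ess_sup_on Q g \<le> ess_sup_on Q (\<lambda>t. c * g t)" .
qed

lemma lebesgue_affine_measurable_real:
  fixes a c :: real
  assumes "c \<noteq> 0"
  shows "(\<lambda>s. a + c * s) \<in> lebesgue \<rightarrow>\<^sub>M lebesgue"
  using lebesgue_affine_measurable[where c="\<lambda>_::real. c" and t=a] assms by simp

lemma AE_lebesgue_neq: "AE t in lebesgue. t \<noteq> (a::real)"
  by (rule AE_I'[of "{a}"]) auto

lemma AE_lebesgue_affine_iff:
  fixes a L :: real
  assumes L: "L \<noteq> 0" and P: "Measurable.pred lebesgue P"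
  shows "(AE t in lebesgue. P t) \<longleftrightarrow> (AE s in lebesgue. P (a + L * s))"
proof -
  have "(AE t in lebesgue. P t) \<longleftrightarrow>
      (AE t in density (distr lebesgue lebesgue (\<lambda>s. a + L * s)) (\<lambda>_. ennreal \<bar>L\<bar>). P t)"
    by (rule arg_cong[where f="\<lambda>M. almost_everywhere M P"], rule lebesgue_real_affine[OF L])
  also have "\<dots> \<longleftrightarrow> (AE t in distr lebesgue lebesgue (\<lambda>s. a + L * s). P t)"
    using L by (subst AE_density) auto
  also have "\<dots> \<longleftrightarrow> (AE s in lebesgue. P (a + L * s))"
    using P lebesgue_affine_measurable_real[OF L, of a] by (subst AE_distr_iff) (auto simp: pred_def)
  finally show ?thesis .
qed

lemma ess_sup_on_affine:
  fixes a L :: real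
  assumes L: "L > 0" and g[measurable]: "g \<in> borel_measurable lebesgue"
  shows "ess_sup_on (\<lambda>s. s \<in> {0..1}) (\<lambda>s. g (a + L * s)) = ess_sup_on (\<lambda>t. t \<in> {a..a+L}) g"
  unfolding ess_sup_on_def
proof (intro arg_cong[where f=Inf] Collect_cong)
  fix c
  have "(\<lambda>t::real. t) \<in> borel_measurable lebesgue"
    by (simp add: measurable_completion)
  then have "Measurable.pred lebesgue (\<lambda>t. t \<in> {a..a+L} \<longrightarrow> ennreal \<bar>g t\<bar> \<le> c)"
    by measurable
  then have "(AE t in lebesgue. t \<in> {a..a+L} \<longrightarrow> ennreal \<bar>g t\<bar> \<le> c) \<longleftrightarrow>
        (AE s in lebesgue. a + L * s \<in> {a..a+L} \<longrightarrow> ennreal \<bar>g (a + L * s)\<bar> \<le> c)"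
    using L by (intro AE_lebesgue_affine_iff) simp_all
  moreover have "a + L * s \<in> {a..a+L} \<longleftrightarrow> s \<in> {0..1}" for s
    using L by (auto simp: mult_le_cancel_left1 mult_le_cancel_left2 zero_le_mult_iff)
  ultimately show "(AE s in lebesgue. s \<in> {0..1} \<longrightarrow> ennreal \<bar>g (a + L * s)\<bar> \<le> c) \<longleftrightarrow>
        (AE t in lebesgue. t \<in> {a..a+L} \<longrightarrow> ennreal \<bar>g t\<bar> \<le> c)"
    by simp
qed

lemma epow_mono:
  assumes "p \<ge> 0" and "a \<le> b"
  shows "epow a p \<le> epow b p"
proof (cases "b = \<infinity>")
  case True
  then show ?thesis by (simp add: epow_def)
next
  case False
  then have "a \<noteq> \<infinity>" and "enn2real a \<le> enn2real b"
    using assms(2) by (auto simp: top_unique enn2real_mono top.not_eq_extremum)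
  with False assms(1) show ?thesis
    by (auto simp: epow_def intro!: ennreal_leI powr_mono2)
qed

lemma epow_0: "p > 0 \<Longrightarrow> epow 0 p = 0"
  by (simp add: epow_def)

lemma epow_cmult:
  assumes c: "c > 0"
  shows "epow (ennreal c * A) p = ennreal (c powr p) * epow A p"
proof (cases "A = \<infinity>")
  case True
  then show ?thesis using c by (simp add: epow_def ennreal_mult_top)
next
  case False
  then obtain r where r: "r \<ge> 0" "A = ennreal r" by (cases A) auto
  then have "ennreal c * A = ennreal (c * r)" using c by (simp add: ennreal_mult)
  with r c show ?thesis
    by (simp add: epow_def powr_mult ennreal_mult[symmetric])
qed

lemma epow_SUP_le:
  fixes a :: "'i \<Rightarrow> ennreal"
  assumes p: "p > 0" and le: "\<And>k. k \<in> K \<Longrightarrow> epow (a k) p \<le> S"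
  shows "epow (SUP k\<in>K. a k) p \<le> S"
proof (cases "S = \<infinity>")
  case True
  then show ?thesis by simp
next
  case False
  then obtain s where s: "s \<ge> 0" "S = ennreal s" by (cases S) auto
  have "a k \<le> ennreal (s powr (1/p))" if k: "k \<in> K" for k
  proof -
    have "a k \<noteq> \<infinity>" using le[OF k] s by (auto simp: epow_def top_unique)
    then obtain r where r: "r \<ge> 0" "a k = ennreal r" by (cases "a k") auto
    then have "r powr p \<le> s"
      using le[OF k] s by (simp add: epow_def ennreal_le_iff)
    then have "(r powr p) powr (1/p) \<le> s powr (1/p)" using p r by (intro powr_mono2) auto
    then show ?thesis using p r by (simp add: powr_powr ennreal_leI)
  qed
  then have "epow (SUP k\<in>K. a k) p \<le> epow (ennreal (s powr (1/p))) p"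
    using p by (intro epow_mono SUP_least) auto
  also have "\<dots> = S" using s p by (simp add: epow_def powr_powr)
  finally show ?thesis .
qed

lemma enn2real_root_le_of_le_double:
  assumes p: "p > 0" and "a \<le> 2 * b" and "b < \<infinity>"
  shows "enn2real a powr (1/p) \<le> 2 powr (1/p) * enn2real b powr (1/p)"
proof -
  have "enn2real a \<le> 2 * enn2real b"
    using assms(2,3) enn2real_mono[of a "2 * b"] by (simp add: ennreal_mult_less_top enn2real_mult)
  then have "enn2real a powr (1/p) \<le> (2 * enn2real b) powr (1/p)"
    using p by (intro powr_mono2) auto
  also have "\<dots> = 2 powr (1/p) * enn2real b powr (1/p)" by (simp add: powr_mult)
  finally show ?thesis .
qed

lemma nn_integral_powr2_atMost:
  "(\<integral>\<^sup>+n. ennreal (2 powr real_of_int n) * indicator {..k} n \<partial>count_space UNIV) =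
    ennreal (2 * 2 powr real_of_int k)"
proof -
  have bij: "bij_betw (\<lambda>m::nat. k - int m) UNIV {..k}"
    by (rule bij_betwI[where g="\<lambda>n. nat (k - n)"]) auto
  have geometric: "2 powr (real_of_int k - real m) = 2 powr real_of_int k * (1/2) ^ m" for m
    by (simp add: powr_diff powr_realpow divide_simps)
  have summable: "summable (\<lambda>m::nat. 2 powr real_of_int k * (1/2::real) ^ m)"
    by (intro summable_mult summable_geometric) simp
  have "(\<integral>\<^sup>+n. ennreal (2 powr real_of_int n) * indicator {..k} n \<partial>count_space UNIV)
      = (\<integral>\<^sup>+n. ennreal (2 powr real_of_int n) \<partial>count_space {..k})"
    by (simp add: nn_integral_count_space_indicator)
  also have "\<dots> = (\<integral>\<^sup>+m. ennreal (2 powr real_of_int (k - int m)) \<partial>count_space UNIV)"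
    by (rule nn_integral_bij_count_space[OF bij, symmetric])
  also have "\<dots> = (\<Sum>m. ennreal (2 powr real_of_int k * (1/2) ^ m))"
    by (simp add: nn_integral_count_space_nat geometric)
  also have "\<dots> = ennreal (\<Sum>m. 2 powr real_of_int k * (1/2) ^ m)"
    by (rule suminf_ennreal2[OF _ summable]) simp
  also have "(\<Sum>m. 2 powr real_of_int k * (1/2::real) ^ m) = 2 powr real_of_int k * 2"
    using suminf_mult[OF summable_geometric[of "1/2::real"], of "2 powr real_of_int k"]
    by (simp add: suminf_geometric)
  finally show ?thesis by (simp add: mult.commute)
qed

lemma borel_measurable_ennreal_times_indicator_nonneg:
  fixes f :: "real \<Rightarrow> real"
  assumes "f \<in> borel_measurable (restrict_space lebesgue {0..})" and "B \<subseteq> {0..}" and "B \<in> sets lebesgue"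
  shows "(\<lambda>t. ennreal (f t) * indicator B t) \<in> borel_measurable lebesgue"
proof -
  have "(\<lambda>t. indicator {0..} t *\<^sub>R f t) \<in> borel_measurable lebesgue"
    using assms(1) borel_measurable_restrict_space_iff[of "{0..}" lebesgue f] by simp
  then have "(\<lambda>t. ennreal (indicator {0..} t *\<^sub>R f t) * indicator B t) \<in> borel_measurable lebesgue"
    using assms(3) by measurable
  moreover have "ennreal (indicator {0..} t *\<^sub>R f t) * indicator B t = ennreal (f t) * indicator B t" for t
    using assms(2) by (auto simp: indicator_def)
  ultimately show ?thesis by simp
qed

locale dyadic_partition =
  fixes w :: "real \<Rightarrow> real" and x :: "int \<Rightarrow> real"
  assumes partition_pos: "\<And>n. 0 < x n"
    and partition_step: "\<And>n. x n < x (n+1)"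
    and partition_covers: "\<And>t. 0 < t \<Longrightarrow> \<exists>n. x n \<le> t \<and> t < x (n+1)"
    and weight_measurable: "w \<in> borel_measurable (restrict_space lebesgue {0..})"
    and block_weight:
      "\<And>n. (\<integral>\<^sup>+t. ennreal (w t) * indicator {x n..<x (n+1)} t \<partial>lebesgue) = ennreal (2 powr real_of_int n)"
begin

lemma partition_mono: "n \<le> m \<Longrightarrow> x n \<le> x m"
proof (induction m rule: int_ge_induct)
  case (step i)
  then show ?case using partition_step[of i] by linarith
qed simp

lemma block_index_unique:
  assumes "x n \<le> t" "t < x (n+1)" "x m \<le> t" "t < x (m+1)"
  shows "n = m"
proof (rule ccontr)
  assume "n \<noteq> m"
  then have "n + 1 \<le> m \<or> m + 1 \<le> n" by linarith
  then show False
  proof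
    assume "n + 1 \<le> m"
    then show False using assms partition_mono[of "n+1" m] by linarith
  next
    assume "m + 1 \<le> n"
    then show False using assms partition_mono[of "m+1" n] by linarith
  qed
qed

definition block_index :: "real \<Rightarrow> int" where
  "block_index t = (THE n. x n \<le> t \<and> t < x (n+1))"

lemma block_index_eq:
  assumes "x k \<le> t" "t < x (k+1)"
  shows "block_index t = k"
  unfolding block_index_def
proof (rule the_equality)
  show "x k \<le> t \<and> t < x (k + 1)" using assms by simp
  fix n assume "x n \<le> t \<and> t < x (n + 1)"
  then show "n = k" using block_index_unique[of n t k] assms by simp
qed

lemma in_block_index:
  assumes "0 < t"
  shows "x (block_index t) \<le> t" and "t < x (block_index t + 1)"
  using partition_covers[OF assms] block_index_eq by blast+

lemma nn_integral_block_indicator: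
  fixes h :: "int \<Rightarrow> ennreal"
  shows "(\<integral>\<^sup>+n. h n * indicator {x n..<x (n+1)} t \<partial>count_space UNIV) =
    (if 0 < t then h (block_index t) else 0)"
proof (cases "0 < t")
  case True
  have "t \<in> {x n..<x (n+1)} \<longleftrightarrow> n = block_index t" for n
    using block_index_eq[of n t] in_block_index[OF True] by auto
  then have "h n * indicator {x n..<x (n+1)} t = h n * indicator {block_index t} n" for n
    by (simp add: indicator_def)
  with True show ?thesis by simp
next
  case False
  then have "t \<notin> {x n..<x (n+1)}" for n
    using partition_pos[of n] by simp
  with False show ?thesis by simp
qed

lemma measurable_weight_block:
  "(\<lambda>t. ennreal (w t) * indicator {x n..<x (n+1)} t) \<in> borel_measurable lebesgue"
  using partition_pos[of n]
  by (intro borel_measurable_ennreal_times_indicator_nonneg weight_measurable) auto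

lemma nn_integral_blockwise:
  fixes c :: "int \<Rightarrow> ennreal"
  shows "(\<integral>\<^sup>+t. (\<integral>\<^sup>+n. c n * ennreal (w t) * indicator {x n..<x (n+1)} t \<partial>count_space UNIV) \<partial>lebesgue)
    = (\<integral>\<^sup>+n. ennreal (2 powr real_of_int n) * c n \<partial>count_space UNIV)"
proof -
  have "(\<integral>\<^sup>+t. (\<integral>\<^sup>+n. c n * ennreal (w t) * indicator {x n..<x (n+1)} t \<partial>count_space UNIV) \<partial>lebesgue)
    = (\<integral>\<^sup>+n. (\<integral>\<^sup>+t. c n * (ennreal (w t) * indicator {x n..<x (n+1)} t) \<partial>lebesgue) \<partial>count_space UNIV)"
    using measurable_weight_block
    by (subst nn_integral_count_space_nn_integral) (simp_all add: mult.assoc)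
  also have "\<dots> = (\<integral>\<^sup>+n. ennreal (2 powr real_of_int n) * c n \<partial>count_space UNIV)"
    using measurable_weight_block
    by (simp add: nn_integral_cmult block_weight mult.commute)
  finally show ?thesis .
qed

definition block_sup :: "(real \<Rightarrow> real) \<Rightarrow> int \<Rightarrow> ennreal" where
  "block_sup g n = ess_sup_on (\<lambda>s. s \<in> {x n..x (n+1)}) g"

definition weighted_block_sum :: "real \<Rightarrow> (real \<Rightarrow> real) \<Rightarrow> ennreal" where
  "weighted_block_sum p g =
    (\<integral>\<^sup>+n. ennreal (2 powr real_of_int n) * epow (block_sup g n) p \<partial>count_space UNIV)"

lemma shifted_block_sum_le_tilde_int:
  assumes p: "p \<ge> 0"
  shows "(\<integral>\<^sup>+n. ennreal (2 powr real_of_int n) * epow (block_sup g (n+1)) p \<partial>count_space UNIV)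
    \<le> tilde_int p w g"
proof -
  have "epow (block_sup g (block_index t + 1)) p * ennreal (w t)
      \<le> epow (tilde g t) p * ennreal (w t) * indicator {0..} t" if t: "0 < t" for t
  proof -
    note block = in_block_index[OF t]
    have "block_sup g (block_index t + 1) \<le> tilde g t"
      unfolding block_sup_def tilde_eq_ess_sup_on
      using block by (intro ess_sup_on_mono AE_I2) auto
    then show ?thesis
      using t p by (auto intro: mult_right_mono epow_mono)
  qed
  then have "(\<integral>\<^sup>+t. (\<integral>\<^sup>+n. epow (block_sup g (n+1)) p * ennreal (w t) * indicator {x n..<x (n+1)} t
      \<partial>count_space UNIV) \<partial>lebesgue) \<le> tilde_int p w g"
    unfolding tilde_int_def nn_integral_block_indicator by (intro nn_integral_mono) auto
  then show ?thesis
    by (simp only: nn_integral_blockwise)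
qed

lemma tilde_int_le_partition_sum:
  assumes p: "p \<ge> 0"
  shows "tilde_int p w g
    \<le> (\<integral>\<^sup>+n. ennreal (2 powr real_of_int n) * epow (tilde g (x n)) p \<partial>count_space UNIV)"
proof -
  have pointwise: "epow (tilde g t) p * ennreal (w t)
      \<le> epow (tilde g (x (block_index t))) p * ennreal (w t)" if t: "0 < t" for t
  proof -
    note block = in_block_index[OF t]
    have "tilde g t \<le> tilde g (x (block_index t))"
      unfolding tilde_eq_ess_sup_on using block by (intro ess_sup_on_mono AE_I2) auto
    then show ?thesis
      using t p by (auto intro: mult_right_mono epow_mono)
  qed
  have "tilde_int p w g \<le> (\<integral>\<^sup>+t. (\<integral>\<^sup>+n. epow (tilde g (x n)) p * ennreal (w t)
      * indicator {x n..<x (n+1)} t \<partial>count_space UNIV) \<partial>lebesgue)"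
    unfolding tilde_int_def nn_integral_block_indicator
    by (rule nn_integral_mono_AE)
      (use AE_lebesgue_neq[of 0] in \<open>eventually_elim, auto simp: indicator_def intro: pointwise\<close>)
  then show ?thesis
    by (simp only: nn_integral_blockwise)
qed

lemma tilde_partition_le_SUP_block_sup: "tilde g (x n) \<le> (SUP k\<in>{n..}. block_sup g k)"
  unfolding tilde_eq_ess_sup_on
proof (rule ess_sup_on_least)
  have "AE t in lebesgue. \<forall>k. t \<in> {x k..x (k+1)} \<longrightarrow> ennreal \<bar>g t\<bar> \<le> block_sup g k"
    unfolding block_sup_def by (subst AE_all_countable) (auto intro: AE_le_ess_sup_on)
  then show "AE t in lebesgue. x n \<le> t \<longrightarrow> ennreal \<bar>g t\<bar> \<le> (SUP k\<in>{n..}. block_sup g k)"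
  proof eventually_elim
    case (elim t)
    show ?case
    proof
      assume t: "x n \<le> t"
      then have "0 < t" using partition_pos[of n] by linarith
      note block = in_block_index[OF this]
      then have "n \<le> block_index t"
        using t partition_mono[of "block_index t + 1" n] by force
      have "ennreal \<bar>g t\<bar> \<le> block_sup g (block_index t)" using elim block by auto
      also have "\<dots> \<le> (SUP k\<in>{n..}. block_sup g k)"
        using \<open>n \<le> block_index t\<close> by (intro SUP_upper) simp
      finally show "ennreal \<bar>g t\<bar> \<le> (SUP k\<in>{n..}. block_sup g k)" .
    qed
  qed
qed

lemma epow_tilde_partition_le_tail_sum:
  assumes p: "p > 0"
  shows "epow (tilde g (x n)) p \<le> (\<integral>\<^sup>+k. epow (block_sup g k) p * indicator {n..} k \<partial>count_space UNIV)"
proof -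
  have "epow (tilde g (x n)) p \<le> epow (SUP k\<in>{n..}. block_sup g k) p"
    using p tilde_partition_le_SUP_block_sup by (intro epow_mono) auto
  also have "\<dots> \<le> (\<integral>\<^sup>+k. epow (block_sup g k) p * indicator {n..} k \<partial>count_space UNIV)"
  proof (rule epow_SUP_le[OF p])
    fix k assume k: "k \<in> {n..}"
    have "epow (block_sup g k) p
        = (\<integral>\<^sup>+k'. epow (block_sup g k') p * indicator {k} k' \<partial>count_space UNIV)"
      by simp
    also have "\<dots> \<le> (\<integral>\<^sup>+k. epow (block_sup g k) p * indicator {n..} k \<partial>count_space UNIV)"
      using k by (intro nn_integral_mono) (auto simp: indicator_def)
    finally show "epow (block_sup g k) p
        \<le> (\<integral>\<^sup>+k. epow (block_sup g k) p * indicator {n..} k \<partial>count_space UNIV)" .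
  qed
  finally show ?thesis .
qed

lemma tilde_int_le_weighted_block_sum:
  assumes p: "p > 0"
  shows "tilde_int p w g \<le> 2 * weighted_block_sum p g"
proof -
  let ?a = "\<lambda>k. epow (block_sup g k) p"
  have "tilde_int p w g \<le> (\<integral>\<^sup>+n. ennreal (2 powr real_of_int n) * epow (tilde g (x n)) p \<partial>count_space UNIV)"
    using p by (intro tilde_int_le_partition_sum) simp
  also have "\<dots> \<le> (\<integral>\<^sup>+n. ennreal (2 powr real_of_int n) * (\<integral>\<^sup>+k. ?a k * indicator {n..} k
      \<partial>count_space UNIV) \<partial>count_space UNIV)"
    by (intro nn_integral_mono mult_left_mono epow_tilde_partition_le_tail_sum p) simp
  also have "\<dots> = (\<integral>\<^sup>+n. (\<integral>\<^sup>+k. ennreal (2 powr real_of_int n) * (?a k * indicator {n..} k)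
      \<partial>count_space UNIV) \<partial>count_space UNIV)"
    by (rule nn_integral_cong, rule nn_integral_cmult[symmetric]) simp
  also have "\<dots> = (\<integral>\<^sup>+k. (\<integral>\<^sup>+n. ennreal (2 powr real_of_int n) * (?a k * indicator {n..} k)
      \<partial>count_space UNIV) \<partial>count_space UNIV)"
    by (rule nn_integral_count_space_nn_integral) simp_all
  also have "\<dots> = (\<integral>\<^sup>+k. 2 * (ennreal (2 powr real_of_int k) * ?a k) \<partial>count_space UNIV)"
  proof (rule nn_integral_cong)
    fix k :: int
    have "(\<integral>\<^sup>+n. ennreal (2 powr real_of_int n) * (?a k * indicator {n..} k) \<partial>count_space UNIV)
       = (\<integral>\<^sup>+n. ?a k * (ennreal (2 powr real_of_int n) * indicator {..k} n) \<partial>count_space UNIV)"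
      by (intro nn_integral_cong) (auto simp: indicator_def mult.commute)
    also have "\<dots> = ?a k * ennreal (2 * 2 powr real_of_int k)"
      by (simp add: nn_integral_cmult nn_integral_powr2_atMost)
    finally show "(\<integral>\<^sup>+n. ennreal (2 powr real_of_int n) * (?a k * indicator {n..} k) \<partial>count_space UNIV)
       = 2 * (ennreal (2 powr real_of_int k) * ?a k)"
      by (simp add: ennreal_mult mult_ac)
  qed
  also have "\<dots> = 2 * weighted_block_sum p g"
    unfolding weighted_block_sum_def by (rule nn_integral_cmult) simp
  finally show ?thesis .
qed

lemma weighted_block_sum_le_tilde_int:
  assumes p: "p \<ge> 0"
  shows "weighted_block_sum p g \<le> 2 * tilde_int p w g"
proof -
  have shift: "bij_betw (\<lambda>n::int. n + 1) UNIV UNIV"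
    by (rule bij_betwI[where g="\<lambda>n. n - 1"]) auto
  have "weighted_block_sum p g =
      (\<integral>\<^sup>+n. ennreal (2 powr real_of_int (n+1)) * epow (block_sup g (n+1)) p \<partial>count_space UNIV)"
    unfolding weighted_block_sum_def by (rule nn_integral_bij_count_space[OF shift, symmetric])
  also have "\<dots> = (\<integral>\<^sup>+n. 2 * (ennreal (2 powr real_of_int n) * epow (block_sup g (n+1)) p) \<partial>count_space UNIV)"
    by (intro nn_integral_cong) (simp add: powr_add ennreal_mult mult_ac)
  also have "\<dots> = 2 * (\<integral>\<^sup>+n. ennreal (2 powr real_of_int n) * epow (block_sup g (n+1)) p \<partial>count_space UNIV)"
    by (rule nn_integral_cmult) simp
  also have "\<dots> \<le> 2 * tilde_int p w g"
    by (intro mult_left_mono shifted_block_sum_le_tilde_int p) simp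
  finally show ?thesis .
qed

lemma block_length_pos: "x (n+1) - x n > 0"
  using partition_step[of n] by simp

definition rescale :: "real \<Rightarrow> (real \<Rightarrow> real) \<Rightarrow> int \<Rightarrow> real \<Rightarrow> real" where
  "rescale p f n s = 2 powr (real_of_int n / p) * f (x n + (x (n+1) - x n) * s)"

lemma rescale_measurable:
  assumes f: "f \<in> borel_measurable (restrict_space lebesgue {0..})"
  shows "rescale p f n \<in> borel_measurable (restrict_space lebesgue {0..1})"
proof -
  have "(\<lambda>s. x n + (x (n+1) - x n) * s)
      \<in> restrict_space lebesgue {0..1} \<rightarrow>\<^sub>M restrict_space lebesgue {0..}"
    using block_length_pos[of n] partition_pos[of n]
    by (intro measurable_restrict_space3 lebesgue_affine_measurable_real) auto
  from measurable_compose[OF this f] show ?thesis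
    unfolding rescale_def[abs_def] by (intro borel_measurable_times) simp_all
qed

lemma Linf01_norm_rescale:
  assumes f: "f \<in> borel_measurable (restrict_space lebesgue {0..})"
  shows "Linf01_norm (rescale p f n) = ennreal (2 powr (real_of_int n / p)) * block_sup f n"
proof -
  define L where "L = x (n+1) - x n"
  have L: "L > 0" using block_length_pos[of n] by (simp add: L_def)
  \<comment> \<open>\<open>ess_sup_on_affine\<close> needs measurability on all of \<real>, so extend \<open>f\<close> by zero\<close>
  define f0 where "f0 t = indicator {0..} t *\<^sub>R f t" for t
  have f0: "f0 \<in> borel_measurable lebesgue"
    using borel_measurable_restrict_space_iff[of "{0..}" lebesgue f] f by (simp add: f0_def[abs_def])
  have "Linf01_norm (rescale p f n) =
      ennreal (2 powr (real_of_int n / p)) * ess_sup_on (\<lambda>s. s \<in> {0..1}) (\<lambda>s. f (x n + L * s))"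
    unfolding Linf01_norm_eq_ess_sup_on rescale_def[abs_def] L_def by (rule ess_sup_on_cmult) simp
  also have "ess_sup_on (\<lambda>s. s \<in> {0..1}) (\<lambda>s. f (x n + L * s)) =
      ess_sup_on (\<lambda>s. s \<in> {0..1}) (\<lambda>s. f0 (x n + L * s))"
    using L partition_pos[of n] by (intro ess_sup_on_cong AE_I2) (auto simp: f0_def)
  also have "\<dots> = ess_sup_on (\<lambda>t. t \<in> {x n..x n + L}) f0"
    by (rule ess_sup_on_affine[OF L f0])
  also have "\<dots> = block_sup f n"
    unfolding block_sup_def using partition_pos[of n]
    by (intro ess_sup_on_cong AE_I2) (auto simp: f0_def L_def)
  finally show ?thesis .
qed

lemma lp_sum_rescale:
  assumes p: "p > 0" and f: "f \<in> borel_measurable (restrict_space lebesgue {0..})"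
  shows "lp_sum p (rescale p f) = weighted_block_sum p f"
  unfolding lp_sum_def weighted_block_sum_def
proof (rule nn_integral_cong)
  fix n :: int
  have "(2 powr (real_of_int n / p)) powr p = 2 powr real_of_int n"
    using p by (simp add: powr_powr)
  then show "epow (Linf01_norm (rescale p f n)) p = ennreal (2 powr real_of_int n) * epow (block_sup f n) p"
    by (simp add: Linf01_norm_rescale[OF f] epow_cmult)
qed

definition unrescale :: "real \<Rightarrow> (int \<Rightarrow> real \<Rightarrow> real) \<Rightarrow> real \<Rightarrow> real" where
  "unrescale p y t = (if 0 < t then 2 powr (- (real_of_int (block_index t) / p)) *
      y (block_index t) ((t - x (block_index t)) / (x (block_index t + 1) - x (block_index t))) else 0)"

lemma unrescale_on_block:
  assumes "x n \<le> t" "t < x (n+1)"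
  shows "unrescale p y t = 2 powr (- (real_of_int n / p)) * y n ((t - x n) / (x (n+1) - x n))"
  using assms partition_pos[of n] by (simp add: unrescale_def block_index_eq)

lemma rescale_unrescale:
  assumes s: "0 \<le> s" "s < 1"
  shows "rescale p (unrescale p y) n s = y n s"
proof -
  define L where "L = x (n+1) - x n"
  have L: "L > 0" using block_length_pos[of n] by (simp add: L_def)
  have "L * s < L" using L s by simp
  then have "x n + L * s < x (n+1)"
    unfolding L_def by linarith
  moreover have "x n \<le> x n + L * s" using L s by simp
  ultimately have "unrescale p y (x n + L * s) =
      2 powr (- (real_of_int n / p)) * y n ((x n + L * s - x n) / L)"
    unfolding L_def by (intro unrescale_on_block)
  also have "(x n + L * s - x n) / L = s" using L by simp
  finally have "unrescale p y (x n + L * s) = 2 powr (- (real_of_int n / p)) * y n s" .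
  moreover have "rescale p (unrescale p y) n s = 2 powr (real_of_int n / p) * unrescale p y (x n + L * s)"
    by (simp add: rescale_def L_def)
  ultimately show ?thesis
    by (simp add: powr_minus)
qed

lemma unrescale_measurable_on_block:
  assumes y: "y n \<in> borel_measurable (restrict_space lebesgue {0..1})"
  shows "unrescale p y \<in> borel_measurable (restrict_space lebesgue {x n..<x (n+1)})"
proof -
  define L where "L = x (n+1) - x n"
  have L: "L > 0" using block_length_pos[of n] by (simp add: L_def)
  have affine: "- x n / L + 1 / L * t = (t - x n) / L" for t
    using L by (simp add: field_simps)
  have "(\<lambda>t. - x n / L + 1 / L * t) \<in> restrict_space lebesgue {x n..<x (n+1)} \<rightarrow>\<^sub>M restrict_space lebesgue {0..1}"
  proof (intro measurable_restrict_space3 lebesgue_affine_measurable_real)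
    show "(\<lambda>t. - x n / L + 1 / L * t) \<in> {x n..<x (n+1)} \<rightarrow> {0..1}"
    proof
      fix t assume "t \<in> {x n..<x (n+1)}"
      then have "0 \<le> t - x n" "t - x n \<le> L" by (auto simp: L_def)
      then have "0 \<le> (t - x n) / L" "(t - x n) / L \<le> 1"
        using L by (simp_all add: divide_nonneg_pos divide_le_eq_1_pos)
      then show "- x n / L + 1 / L * t \<in> {0..1}"
        by (simp only: affine atLeastAtMost_iff)
    qed
  qed (use L in simp)
  from borel_measurable_times[OF borel_measurable_const measurable_compose[OF this y]]
  have "(\<lambda>t. 2 powr (- (real_of_int n / p)) * y n (- x n / L + 1 / L * t))
      \<in> borel_measurable (restrict_space lebesgue {x n..<x (n+1)})" .
  moreover have eq: "unrescale p y t = 2 powr (- (real_of_int n / p)) * y n (- x n / L + 1 / L * t)"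
    if "t \<in> space (restrict_space lebesgue {x n..<x (n+1)})" for t
  proof -
    have "x n \<le> t" "t < x (n+1)" using that by (simp_all add: space_restrict_space)
    then show ?thesis unfolding affine unfolding L_def by (rule unrescale_on_block)
  qed
  ultimately show ?thesis
    by (subst measurable_cong[OF eq])
qed

lemma unrescale_measurable:
  assumes y: "\<And>n. y n \<in> borel_measurable (restrict_space lebesgue {0..1})"
  shows "unrescale p y \<in> borel_measurable lebesgue"
proof (rule measurable_piecewise_restrict[of "insert {..0} (range (\<lambda>n. {x n..<x (n+1)}))"])
  show "countable (insert {..0} (range (\<lambda>n. {x n..<x (n+1)})))" by simp
  show "space lebesgue \<subseteq> \<Union> (insert {..0} (range (\<lambda>n. {x n..<x (n+1)})))"
  proof
    fix t :: real
    show "t \<in> \<Union> (insert {..0} (range (\<lambda>n. {x n..<x (n+1)})))"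
    proof (cases "0 < t")
      case True
      then have "t \<in> {x (block_index t)..<x (block_index t + 1)}"
        using in_block_index by simp
      then show ?thesis by blast
    qed simp
  qed
  have "(\<lambda>t. indicator {..0} t *\<^sub>R unrescale p y t) = (\<lambda>_. 0)"
    by (rule ext) (simp add: unrescale_def indicator_def)
  then have nonpos: "unrescale p y \<in> borel_measurable (restrict_space lebesgue {..0})"
    using borel_measurable_restrict_space_iff[of "{..0}" lebesgue "unrescale p y"] by simp
  fix \<Omega> assume "\<Omega> \<in> insert {..0} (range (\<lambda>n. {x n..<x (n+1)}))"
  then consider "\<Omega> = {..0}" | n where "\<Omega> = {x n..<x (n+1)}" by blast
  then show "unrescale p y \<in> borel_measurable (restrict_space lebesgue \<Omega>)"
    and "\<Omega> \<inter> space lebesgue \<in> sets lebesgue"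
    by (cases; simp add: nonpos unrescale_measurable_on_block[OF y])+
qed

lemma rescale_in_lpLinf:
  assumes "p > 0" and "f \<in> tildeLp p w"
  shows "rescale p f \<in> lpLinf p"
proof -
  have "lp_sum p (rescale p f) \<le> 2 * tilde_int p w f"
    using assms weighted_block_sum_le_tilde_int[of p f] by (simp add: tildeLp_def lp_sum_rescale)
  also have "\<dots> < \<infinity>"
    using assms by (simp add: tildeLp_def ennreal_mult_less_top)
  finally show ?thesis
    using assms rescale_measurable by (simp add: tildeLp_def lpLinf_def)
qed

lemma lpLinf_norm_rescale_le:
  assumes p: "p > 0" and f: "f \<in> tildeLp p w"
  shows "lpLinf_norm p (rescale p f) \<le> 2 powr (1/p) * tildeLp_norm p w f"
  unfolding lpLinf_norm_def tildeLp_norm_def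
  using f weighted_block_sum_le_tilde_int[OF less_imp_le[OF p], of f]
  by (intro enn2real_root_le_of_le_double p) (simp_all add: tildeLp_def lp_sum_rescale p)

lemma tildeLp_norm_le_rescale:
  assumes p: "p > 0" and f: "f \<in> tildeLp p w"
  shows "tildeLp_norm p w f \<le> 2 powr (1/p) * lpLinf_norm p (rescale p f)"
  unfolding lpLinf_norm_def tildeLp_norm_def
  using rescale_in_lpLinf[OF p f] f tilde_int_le_weighted_block_sum[OF p, of f]
  by (intro enn2real_root_le_of_le_double p) (simp_all add: tildeLp_def lpLinf_def lp_sum_rescale p)

lemma rescale_surjective:
  assumes p: "p > 0" and y: "y \<in> lpLinf p"
  shows "\<exists>f \<in> tildeLp p w. lpLinf_norm p (\<lambda>n s. rescale p f n s - y n s) = 0"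
proof
  have ym: "\<And>n. y n \<in> borel_measurable (restrict_space lebesgue {0..1})"
    and finite: "lp_sum p y < \<infinity>"
    using y by (auto simp: lpLinf_def)
  have f: "unrescale p y \<in> borel_measurable (restrict_space lebesgue {0..})"
    by (intro measurable_restrict_space1 unrescale_measurable ym)
  \<comment> \<open>only almost everywhere: the point \<open>s = 1\<close> belongs to the next block\<close>
  have AE_eq: "AE s in lebesgue. s \<in> {0..1} \<longrightarrow> rescale p (unrescale p y) n s = y n s" for n
    using AE_lebesgue_neq[of 1] by eventually_elim (auto simp: rescale_unrescale)
  have "Linf01_norm (rescale p (unrescale p y) n) = Linf01_norm (y n)" for n
    unfolding Linf01_norm_eq_ess_sup_on
    by (intro ess_sup_on_cong) (use AE_eq[of n] in \<open>eventually_elim, auto\<close>)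
  then have "weighted_block_sum p (unrescale p y) = lp_sum p y"
    using lp_sum_rescale[OF p f] by (simp add: lp_sum_def)
  then have "tilde_int p w (unrescale p y) \<le> 2 * lp_sum p y"
    using tilde_int_le_weighted_block_sum[OF p] by metis
  also have "\<dots> < \<infinity>" using finite by (simp add: ennreal_mult_less_top)
  finally show "unrescale p y \<in> tildeLp p w" using f by (simp add: tildeLp_def)
  have "Linf01_norm (\<lambda>s. rescale p (unrescale p y) n s - y n s) = 0" for n
    unfolding Linf01_norm_eq_ess_sup_on
    by (intro antisym ess_sup_on_least zero_le) (use AE_eq[of n] in \<open>eventually_elim, auto\<close>)
  then show "lpLinf_norm p (\<lambda>n s. rescale p (unrescale p y) n s - y n s) = 0"
    using p by (simp add: lpLinf_norm_def lp_sum_def epow_0)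
qed

end

locale admissible_weight =
  fixes w :: "real \<Rightarrow> real"
  assumes weight_measurable: "w \<in> borel_measurable (restrict_space lebesgue {0..})"
    and weight_locally_integrable: "\<And>a. a \<ge> 0 \<Longrightarrow> set_integrable lebesgue {0..a} w"
    and weight_pos: "AE t in lebesgue. t \<ge> 0 \<longrightarrow> w t > 0"
    and weight_not_integrable: "(\<integral>\<^sup>+ t. ennreal (w t) * indicator {0..} t \<partial>lebesgue) = \<infinity>"
begin

definition cumulative_weight :: "real \<Rightarrow> real" where
  "cumulative_weight a = (LINT t:{0..a}|lebesgue. w t)"

lemma measurable_weight_indicator:
  "B \<subseteq> {0..} \<Longrightarrow> B \<in> sets lebesgue \<Longrightarrow>
    (\<lambda>t. ennreal (w t) * indicator B t) \<in> borel_measurable lebesgue"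
  by (rule borel_measurable_ennreal_times_indicator_nonneg[OF weight_measurable])

lemma nn_integral_weight_atLeastAtMost:
  assumes a: "a \<ge> 0"
  shows "(\<integral>\<^sup>+t. ennreal (w t) * indicator {0..a} t \<partial>lebesgue) = ennreal (cumulative_weight a)"
proof -
  have "(\<integral>\<^sup>+t. ennreal (w t) * indicator {0..a} t \<partial>lebesgue)
      = (\<integral>\<^sup>+t. ennreal (indicator {0..a} t *\<^sub>R w t) \<partial>lebesgue)"
    by (intro nn_integral_cong) (auto simp: indicator_def)
  also have "\<dots> = ennreal (integral\<^sup>L lebesgue (\<lambda>t. indicator {0..a} t *\<^sub>R w t))"
  proof (rule nn_integral_eq_integral)
    show "integrable lebesgue (\<lambda>t. indicator {0..a} t *\<^sub>R w t)"
      using weight_locally_integrable[OF a] by (simp add: set_integrable_def)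
    show "AE t in lebesgue. 0 \<le> indicator {0..a} t *\<^sub>R w t"
      using weight_pos by eventually_elim (auto simp: indicator_def)
  qed
  also have "\<dots> = ennreal (cumulative_weight a)"
    by (simp add: cumulative_weight_def set_lebesgue_integral_def)
  finally show ?thesis .
qed

lemma nn_integral_weight_atLeastLessThan:
  assumes "a \<ge> 0"
  shows "(\<integral>\<^sup>+t. ennreal (w t) * indicator {0..<a} t \<partial>lebesgue) = ennreal (cumulative_weight a)"
proof -
  have "(\<integral>\<^sup>+t. ennreal (w t) * indicator {0..<a} t \<partial>lebesgue)
      = (\<integral>\<^sup>+t. ennreal (w t) * indicator {0..a} t \<partial>lebesgue)"
    by (rule nn_integral_cong_AE) (use AE_lebesgue_neq[of a] in \<open>eventually_elim, auto simp: indicator_def\<close>)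
  with nn_integral_weight_atLeastAtMost[OF assms] show ?thesis by simp
qed

lemma cumulative_weight_nonneg: "0 \<le> cumulative_weight a"
  unfolding cumulative_weight_def set_lebesgue_integral_def
  by (rule integral_nonneg_AE) (use weight_pos in \<open>eventually_elim, auto simp: indicator_def\<close>)

lemma cumulative_weight_0: "cumulative_weight 0 = 0"
  unfolding cumulative_weight_def set_lebesgue_integral_def
  by (rule integral_eq_zero_AE) (use AE_lebesgue_neq[of 0] in \<open>eventually_elim, auto simp: indicator_def\<close>)

lemma nn_integral_weight_block:
  assumes "0 \<le> a" "a \<le> b"
  shows "(\<integral>\<^sup>+t. ennreal (w t) * indicator {a..<b} t \<partial>lebesgue) =
    ennreal (cumulative_weight b - cumulative_weight a)"
proof -
  let ?X = "\<integral>\<^sup>+t. ennreal (w t) * indicator {a..<b} t \<partial>lebesgue"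
  have split: "ennreal (w t) * indicator {0..<b} t =
      ennreal (w t) * indicator {0..<a} t + ennreal (w t) * indicator {a..<b} t" for t
    using assms by (simp add: indicator_def)
  have "ennreal (cumulative_weight b) = (\<integral>\<^sup>+t. ennreal (w t) * indicator {0..<b} t \<partial>lebesgue)"
    using assms by (simp add: nn_integral_weight_atLeastLessThan)
  also have "\<dots> = (\<integral>\<^sup>+t. ennreal (w t) * indicator {0..<a} t \<partial>lebesgue) + ?X"
    unfolding split using assms
    by (intro nn_integral_add measurable_weight_indicator) auto
  also have "\<dots> = ennreal (cumulative_weight a) + ?X"
    using assms by (simp add: nn_integral_weight_atLeastLessThan)
  finally have "ennreal (cumulative_weight b) = ennreal (cumulative_weight a) + ?X" .
  then have "?X = ennreal (cumulative_weight b) - ennreal (cumulative_weight a)"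
    by simp
  then show ?thesis
    by (simp add: ennreal_minus cumulative_weight_nonneg)
qed

lemma cumulative_weight_strict_mono:
  assumes "0 \<le> a" "a < b"
  shows "cumulative_weight a < cumulative_weight b"
proof -
  have m: "(\<lambda>t. ennreal (w t) * indicator {a..<b} t) \<in> borel_measurable lebesgue"
    using assms by (intro measurable_weight_indicator) auto
  have "(\<integral>\<^sup>+t. ennreal (w t) * indicator {a..<b} t \<partial>lebesgue) \<noteq> 0"
  proof
    assume "(\<integral>\<^sup>+t. ennreal (w t) * indicator {a..<b} t \<partial>lebesgue) = 0"
    then have "AE t in lebesgue. ennreal (w t) * indicator {a..<b} t = 0"
      using nn_integral_0_iff_AE[OF m] by simp
    then have "AE t in lebesgue. indicator {a..<b} t = (0::ennreal)"
      using weight_pos by eventually_elim (use assms in \<open>auto simp: indicator_def\<close>)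
    moreover have "indicator {a..<b} \<in> borel_measurable lebesgue"
      by (rule borel_measurable_indicator) simp
    ultimately have "emeasure lebesgue {a..<b} = 0"
      using nn_integral_0_iff_AE[of "indicator {a..<b}" lebesgue] by simp
    with assms show False by simp
  qed
  then show ?thesis
    using assms nn_integral_weight_block[of a b] by (simp add: ennreal_eq_0_iff)
qed

lemma strict_mono_on_cumulative_weight: "strict_mono_on {0..} cumulative_weight"
  by (intro strict_mono_onI cumulative_weight_strict_mono) auto

lemma continuous_on_cumulative_weight:
  assumes b: "b \<ge> 0"
  shows "continuous_on {0..b} cumulative_weight"
proof -
  have "continuous_on {0..b} (\<lambda>a. integral {0..a} w)"
    using set_lebesgue_integral_eq_integral(1)[OF weight_locally_integrable[OF b]]
    by (rule indefinite_integral_continuous_1)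
  then show ?thesis
  proof (rule continuous_on_eq)
    fix a assume "a \<in> {0..b}"
    then show "integral {0..a} w = cumulative_weight a"
      using set_lebesgue_integral_eq_integral(2)[OF weight_locally_integrable[of a]]
      by (simp add: cumulative_weight_def)
  qed
qed

lemma cumulative_weight_unbounded: "\<exists>a\<ge>0. B < cumulative_weight a"
proof (rule ccontr)
  assume "\<not> (\<exists>a\<ge>0. B < cumulative_weight a)"
  then have bounded: "cumulative_weight (real m) \<le> B" for m :: nat
    by (simp add: not_less)
  define f where "f m t = ennreal (w t) * indicator {0..real m} t" for m :: nat and t
  have "incseq f"
    unfolding incseq_def le_fun_def f_def
    by (auto intro!: mult_left_mono simp: indicator_def)
  moreover have "f m \<in> borel_measurable lebesgue" for m
    unfolding f_def by (intro measurable_weight_indicator) auto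
  ultimately have "(\<integral>\<^sup>+t. (SUP m. f m t) \<partial>lebesgue) = (SUP m. integral\<^sup>N lebesgue (f m))"
    by (rule nn_integral_monotone_convergence_SUP)
  moreover have "(SUP m. f m t) = ennreal (w t) * indicator {0..} t" for t
  proof (rule antisym)
    show "(SUP m. f m t) \<le> ennreal (w t) * indicator {0..} t"
      by (rule SUP_least) (simp add: f_def indicator_def)
    show "ennreal (w t) * indicator {0..} t \<le> (SUP m. f m t)"
      by (rule order_trans[OF _ SUP_upper[of "nat \<lceil>t\<rceil>"]])
        (simp_all add: f_def indicator_def real_nat_ceiling_ge)
  qed
  ultimately have "\<infinity> = (SUP m. integral\<^sup>N lebesgue (f m))"
    using weight_not_integrable by simp
  also have "\<dots> \<le> ennreal B"
  proof (rule SUP_least)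
    fix m
    show "integral\<^sup>N lebesgue (f m) \<le> ennreal B"
      using bounded[of m] unfolding f_def
      by (simp add: nn_integral_weight_atLeastAtMost ennreal_leI)
  qed
  finally show False by (simp add: top_unique)
qed

lemma cumulative_weight_attains:
  assumes "c \<ge> 0"
  shows "\<exists>a\<ge>0. cumulative_weight a = c"
proof -
  obtain b where b: "b \<ge> 0" "c < cumulative_weight b"
    using cumulative_weight_unbounded by blast
  then have "\<exists>a. 0 \<le> a \<and> a \<le> b \<and> cumulative_weight a = c"
    using assms cumulative_weight_0 continuous_on_cumulative_weight[OF b(1)]
    by (intro IVT') auto
  then show ?thesis by blast
qed

lemma dyadic_partition_exists: "\<exists>x. dyadic_partition w x"
proof -
  let ?W = cumulative_weight
  have "\<forall>n::int. \<exists>a. 0 \<le> a \<and> ?W a = 2 powr real_of_int n"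
    using cumulative_weight_attains by simp
  then obtain x where x: "\<And>n. 0 \<le> x n" "\<And>n. ?W (x n) = 2 powr real_of_int n"
    using choice[of "\<lambda>n a. 0 \<le> a \<and> ?W a = 2 powr real_of_int n"] by blast
  have W_less: "?W a < ?W b \<longleftrightarrow> a < b" if "0 \<le> a" "0 \<le> b" for a b
    using strict_mono_on_less[OF strict_mono_on_cumulative_weight] that by simp
  have step: "x n < x (n+1)" for n
    using W_less[OF x(1) x(1), of n "n+1"] by (simp add: x(2))
  show ?thesis
  proof (intro exI[of _ x] dyadic_partition.intro)
    fix n
    show "0 < x n"
      using W_less[OF order_refl x(1)] by (simp add: x(2) cumulative_weight_0)
    show "x n < x (n+1)" by (rule step)
    have "2 powr real_of_int (n+1) - 2 powr real_of_int n = 2 powr real_of_int n"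
      by (simp add: powr_add)
    then show "(\<integral>\<^sup>+t. ennreal (w t) * indicator {x n..<x (n+1)} t \<partial>lebesgue) = ennreal (2 powr real_of_int n)"
      using x(1)[of n] step[of n] by (simp add: nn_integral_weight_block x(2))
  next
    fix t :: real assume t: "0 < t"
    then have Wt: "0 < ?W t"
      using W_less[of 0 t] by (simp add: cumulative_weight_0)
    define k where "k = \<lfloor>log 2 (?W t)\<rfloor>"
    have "2 powr real_of_int k \<le> ?W t"
      using Wt powr_mono[of "real_of_int k" "log 2 (?W t)" 2] by (simp add: k_def)
    moreover have "?W t < 2 powr real_of_int (k+1)"
      using Wt powr_less_mono[of "log 2 (?W t)" "real_of_int k + 1" 2] by (simp add: k_def)
    ultimately show "\<exists>n. x n \<le> t \<and> t < x (n+1)"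
      using t W_less[OF _ x(1), of t] W_less[OF x(1), of t] x(2) by (metis less_le_not_le linorder_not_le)
  qed (rule weight_measurable)
qed

end

theorem proposition2:
  fixes w :: "real \<Rightarrow> real"
  assumes w_meas: "w \<in> borel_measurable (restrict_space lebesgue {0..})"
    and w_locint: "\<And>a. a \<ge> 0 \<Longrightarrow> set_integrable lebesgue {0..a} w"
    and w_pos: "AE t in lebesgue. t \<ge> 0 \<longrightarrow> w t > 0"
    and w_infint: "(\<integral>\<^sup>+ t. ennreal (w t) * indicator {0..} t \<partial>lebesgue) = \<infinity>"
  shows "\<exists>C::real. C > 0 \<and>
    (\<forall>p::real. 1 \<le> p \<longrightarrow>
      (\<exists>(T :: (real \<Rightarrow> real) \<Rightarrow> (int \<Rightarrow> real \<Rightarrow> real)) C1 C2.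
         C1 > 0 \<and> C2 > 0 \<and> C1 * C2 \<le> C \<and>
         (\<forall>f \<in> tildeLp p w. T f \<in> lpLinf p) \<and>
         (\<forall>f \<in> tildeLp p w. \<forall>g \<in> tildeLp p w. \<forall>a b::real.
             T (\<lambda>t. a * f t + b * g t) = (\<lambda>n s. a * T f n s + b * T g n s)) \<and>
         (\<forall>f \<in> tildeLp p w. lpLinf_norm p (T f) \<le> C1 * tildeLp_norm p w f) \<and>
         (\<forall>f \<in> tildeLp p w. tildeLp_norm p w f \<le> C2 * lpLinf_norm p (T f)) \<and>
         (\<forall>y \<in> lpLinf p. \<exists>f \<in> tildeLp p w.
             lpLinf_norm p (\<lambda>n s. T f n s - y n s) = 0)))"
proof -
  interpret admissible_weight w
    using assms by unfold_locales
  obtain x where "dyadic_partition w x"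
    using dyadic_partition_exists by blast
  then interpret P: dyadic_partition w x .
  show ?thesis
  proof (intro exI[of _ 4] conjI allI impI, goal_cases)
    case (2 p)
    then have p: "p > 0" by simp
    have "2 powr (1/p) * 2 powr (1/p) = 2 powr (2/p)"
      by (simp add: powr_add[symmetric])
    also have "\<dots> \<le> 4"
      using \<open>1 \<le> p\<close> powr_mono[of "2/p" 2 2] by (simp add: divide_le_eq)
    finally have constants: "2 powr (1/p) * 2 powr (1/p) \<le> (4::real)" .
    show ?case
      using p constants P.rescale_in_lpLinf P.lpLinf_norm_rescale_le P.tildeLp_norm_le_rescale
        P.rescale_surjective
      by (intro exI[of _ "P.rescale p"] exI[of _ "2 powr (1/p)"])
        (auto simp: P.rescale_def fun_eq_iff algebra_simps)
  qed simp
qed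

end
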